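(* For $n \ge 8$, let $\mu'(n)$ be the minimum number of edges of a (not necessarily connected) non-prime graph of order $n$. Then $\mu'(n) \le n$.
   Context: Graphs are finite and simple. A prime labeling of a graph $G$ of order $n$ is a bijection $\alpha: V(G) \to \{1,2,\dots,n\}$ such that $\gcd(\alpha(u),\alpha(v)) = 1$ for every edge $uv \in E(G)$. $G$ is prime if it admits a prime labeling, and non-prime otherwise. *)

theory Defs
  imports Main
begin

text \<open>A finite simple graph: finite vertex set V, edges are 2-element subsets of V.
  Vertices are taken from nat (every finite graph is isomorphic to one of these).\<close>
definition simple_graph :: "nat set \<Rightarrow> nat set set \<Rightarrow> bool" where
  "simple_graph V E \<longleftrightarrow> finite V \<and> (\<forall>e\<in>E. e \<subseteq> V \<and> card e = 2)"

definition prime_labeling :: "nat set \<Rightarrow> nat set set \<Rightarrow> (nat \<Rightarrow> nat) \<Rightarrow> bool" where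
  "prime_labeling V E \<alpha> \<longleftrightarrow> bij_betw \<alpha> V {1..card V} \<and>
     (\<forall>u v. {u, v} \<in> E \<longrightarrow> coprime (\<alpha> u) (\<alpha> v))"

definition prime_graph :: "nat set \<Rightarrow> nat set set \<Rightarrow> bool" where
  "prime_graph V E \<longleftrightarrow> (\<exists>\<alpha>. prime_labeling V E \<alpha>)"

definition mu' :: "nat \<Rightarrow> nat" where
  "mu' n = (LEAST m. \<exists>V E. simple_graph V E \<and> card V = n \<and> \<not> prime_graph V E \<and> card E = m)"

end

theory Submission
  imports Defs
begin

text \<open>Split \<open>{0..<n}\<close> into consecutive blocks of three vertices and make each block a clique:
  at most one edge per vertex, so at most \<open>n\<close> edges. In a prime labeling the \<open>n div 2\<close>
  vertices with even labels are pairwise non-adjacent, hence lie in distinct blocks; but there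
  are only \<open>(n + 2) div 3\<close> blocks, fewer than \<open>n div 2\<close> once \<open>n \<ge> 8\<close>.\<close>

definition independent_set :: "nat set \<Rightarrow> nat set set \<Rightarrow> nat set \<Rightarrow> bool" where
  "independent_set V E S \<longleftrightarrow> S \<subseteq> V \<and> (\<forall>u\<in>S. \<forall>v\<in>S. u \<noteq> v \<longrightarrow> {u, v} \<notin> E)"

lemma card_even_atLeastAtMost: "card {x \<in> {1..n}. even x} = n div 2"
proof -
  have "{x \<in> {1..n}. even x} = (\<lambda>k. 2 * k) ` {1..n div 2}"
    by (auto elim!: evenE)
  moreover have "inj_on (\<lambda>k. 2 * k) {1..n div 2}"
    by (simp add: inj_on_def)
  ultimately show ?thesis
    by (simp add: card_image)
qed

lemma prime_graph_has_independent_set: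
  assumes "prime_graph V E"
  obtains S where "independent_set V E S" and "card S = card V div 2"
proof -
  from assms obtain \<alpha> where bij: "bij_betw \<alpha> V {1..card V}"
    and coprime: "\<And>u v. {u, v} \<in> E \<Longrightarrow> coprime (\<alpha> u) (\<alpha> v)"
    unfolding prime_graph_def prime_labeling_def by blast
  define S where "S = {v \<in> V. even (\<alpha> v)}"
  have "bij_betw \<alpha> S {x \<in> {1..card V}. even x}"
    unfolding S_def using bij_betw_subset[OF bij] bij
    by (auto simp: bij_betw_def)
  then have "card S = card V div 2"
    using bij_betw_same_card card_even_atLeastAtMost by metis
  moreover have "independent_set V E S"
    unfolding independent_set_def S_def using coprime by fastforce
  ultimately show thesis
    using that by blast
qed

lemma mu'_le_card_edges:
  assumes "simple_graph V E" and "\<not> prime_graph V E"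
  shows "mu' (card V) \<le> card E"
  unfolding mu'_def using assms by (intro Least_le) blast

definition triangle_next :: "nat \<Rightarrow> nat" where
  "triangle_next v = (if v mod 3 = 2 then v - 2 else v + 1)"

definition triangles :: "nat \<Rightarrow> nat set set" where
  "triangles n = (\<lambda>v. {v, triangle_next v}) ` {v. v < n \<and> triangle_next v < n}"

lemma triangle_next_neq: "triangle_next v \<noteq> v"
  unfolding triangle_next_def by auto

lemma triangle_next_same_block:
  assumes "u div 3 = v div 3" and "u \<noteq> v"
  shows "triangle_next u = v \<or> triangle_next v = u"
proof -
  define q r s where "q = u div 3" and "r = u mod 3" and "s = v mod 3"
  have "u = 3 * q + r" "v = 3 * q + s"
    using assms(1) mult_div_mod_eq[of 3 u] mult_div_mod_eq[of 3 v]
    unfolding q_def r_def s_def by linarith+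
  moreover have "r < 3" "s < 3"
    by (simp_all add: r_def s_def)
  ultimately show ?thesis
    using assms(2) unfolding triangle_next_def r_def s_def by auto
qed

lemma simple_graph_triangles: "simple_graph {0..<n} (triangles n)"
proof -
  have "card {v, triangle_next v} = 2" for v
    using triangle_next_neq[of v] by simp
  then show ?thesis
    unfolding simple_graph_def triangles_def by auto
qed

lemma card_triangles_le: "card (triangles n) \<le> n"
proof -
  have "card (triangles n) \<le> card {v. v < n \<and> triangle_next v < n}"
    unfolding triangles_def by (rule card_image_le) simp
  also have "\<dots> \<le> card {0..<n}"
    by (rule card_mono) auto
  finally show ?thesis
    by simp
qed

lemma triangles_edge_same_block:
  assumes "u < n" "v < n" "u \<noteq> v" "u div 3 = v div 3"
  shows "{u, v} \<in> triangles n"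
  using triangle_next_same_block[OF assms(4,3)] assms(1,2)
  unfolding triangles_def by (auto simp: insert_commute)

lemma card_independent_set_triangles:
  assumes "independent_set {0..<n} (triangles n) S"
  shows "card S \<le> (n + 2) div 3"
proof -
  have "inj_on (\<lambda>v. v div 3) S"
  proof (rule inj_onI, rule ccontr)
    fix u v
    assume "u \<in> S" "v \<in> S" "u div 3 = v div 3" "u \<noteq> v"
    moreover from this assms have "{u, v} \<in> triangles n"
      by (intro triangles_edge_same_block) (auto simp: independent_set_def)
    ultimately show False
      using assms unfolding independent_set_def by blast
  qed
  moreover have "(\<lambda>v. v div 3) ` S \<subseteq> {0..<(n + 2) div 3}"
    using assms unfolding independent_set_def by auto
  ultimately have "card S \<le> card {0..<(n + 2) div 3}"
    by (rule card_inj_on_le) simp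
  then show ?thesis
    by simp
qed

lemma not_prime_graph_triangles:
  assumes "n \<ge> 8"
  shows "\<not> prime_graph {0..<n} (triangles n)"
proof
  assume "prime_graph {0..<n} (triangles n)"
  then obtain S where "independent_set {0..<n} (triangles n) S" and "card S = n div 2"
    by (auto elim: prime_graph_has_independent_set)
  then have "n div 2 \<le> (n + 2) div 3"
    using card_independent_set_triangles by metis
  with assms show False
    by presburger
qed

theorem theorem10p5:
  fixes n :: nat
  assumes "n \<ge> 8"
  shows "mu' n \<le> n"
proof -
  have "mu' (card {0..<n}) \<le> card (triangles n)"
    using simple_graph_triangles not_prime_graph_triangles[OF assms] by (rule mu'_le_card_edges)
  then show ?thesis
    using card_triangles_le by (simp add: le_trans)
qed

end
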